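(* Let $X$ be a closed subset of $\mathbb{R}^n$ and let $q\ge p$ be nonnegative integers. Then $\tau^q(X)_p$ is a closed subbundle of $X\times\mathcal{P}_p^*$.
   Context: Notation. $\mathcal{P}_k$ is the space of real polynomials on $\mathbb{R}^n$ of degree $\le k$, $\mathcal{P}_k^*$ its dual, $r_k=\dim\mathcal{P}_k$. For $\xi\in\mathcal{P}_k^*$, $b\in\mathbb{R}^n$, $|\alpha|\le k$: $\xi_\alpha(b):=\xi(\tfrac1{\alpha!}(x-b)^\alpha)$; $\delta_a(P)=P(a)$. A bundle over $X$ with fibres in $W$ is a subset of $X\times W$ whose fibres are linear subspaces. Paratangent bundle of order $k$: for a bundle $E\subset X\times\mathcal{P}_k^*$, $\Delta E=\{(a,b,\xi+\eta):a,b\in X,\xi\in E_a,\eta\in E_b,|a-b|^{k-|\alpha|}|\eta_\alpha(b)|\le1\ \forall|\alpha|\le k\}$, $E'=\{(a,\xi):(a,a,\xi)\in\overline{\Delta E}\}$ (closure in $X\times X\times\mathcal{P}_k^*$), $\rho(E)=\{(a,\xi):\xi\in\operatorname{Span}E'_a\}$; with $E_0=\{(a,\lambda\delta_a):a\in X,\lambda\in\mathbb{R}\}$, $\rho^i(E_0)$ is constant for $i\ge2r_k$ and $\tau^k(X):=\rho^{2r_k}(E_0)$, with fibres $\tau^k_a(X)$. For $a\in\mathbb{R}^n$ let $\pi_a:\mathcal{P}_q\to\mathcal{P}_p$ send $\sum_{|\beta|\le q}c_\beta(x-a)^\beta$ to $\sum_{|\beta|\le p}c_\beta(x-a)^\beta$,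 and let $\iota_a:\mathcal{P}_p^*\to\mathcal{P}_q^*$, $\iota_a(\xi)=\xi\circ\pi_a$ (an injection whose image is the annihilator of $\{P\in\mathcal{P}_q:D^\alpha P(a)=0,\ |\alpha|\le p\}$). $\tau^q(X)_p$ is the bundle over $X$ with fibres $\tau^q_a(X)_p:=\iota_a^{-1}(\tau^q_a(X))\subset\mathcal{P}_p^*$. *)

theory Defs
  imports "HOL-Analysis.Analysis"
begin

text \<open>Multi-indices on R^n (n = CARD('n)) are functions 'n => nat.
 A polynomial of degree <= k is represented by its coefficient function
 w.r.t. the monomial basis x^beta (centered at 0); an element xi of the dual
 space P_k^* is represented by its coordinate function beta |-> xi(x^beta),
 vanishing for |beta| > k.  The function space carries the product topology,
 which on this finite-dimensional subspace is the usual one.\<close>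

type_synonym 'n mi = "'n \<Rightarrow> nat"
type_synonym 'n coefs = "'n mi \<Rightarrow> real"

definition mdeg :: "('n::finite) mi \<Rightarrow> nat" where
  "mdeg \<alpha> = (\<Sum>i\<in>UNIV. \<alpha> i)"

definition mis :: "nat \<Rightarrow> ('n::finite) mi set" where
  "mis k = {\<alpha>. mdeg \<alpha> \<le> k}"

definition rdim :: "nat \<Rightarrow> ('n::finite) itself \<Rightarrow> nat" where
  "rdim k _ = card (mis k :: 'n mi set)"

definition mfact :: "('n::finite) mi \<Rightarrow> real" where
  "mfact \<alpha> = (\<Prod>i\<in>UNIV. fact (\<alpha> i))"

definition Pk :: "nat \<Rightarrow> ('n::finite) coefs set" where
  "Pk k = {P. \<forall>\<alpha>. k < mdeg \<alpha> \<longrightarrow> P \<alpha> = 0}"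

definition dualk :: "nat \<Rightarrow> ('n::finite) coefs set" where
  "dualk k = {\<xi>. \<forall>\<alpha>. k < mdeg \<alpha> \<longrightarrow> \<xi> \<alpha> = 0}"

definition app :: "nat \<Rightarrow> ('n::finite) coefs \<Rightarrow> 'n coefs \<Rightarrow> real" where
  "app k \<xi> P = (\<Sum>\<beta>\<in>mis k. \<xi> \<beta> * P \<beta>)"

definition mono :: "('n::finite) mi \<Rightarrow> 'n coefs" where
  "mono \<beta> = (\<lambda>\<gamma>. if \<gamma> = \<beta> then 1 else 0)"

text \<open>coefficients of (x - b)^alpha\<close>
definition shiftmono :: "real^('n::finite) \<Rightarrow> 'n mi \<Rightarrow> 'n coefs" where
  "shiftmono b \<alpha> = (\<lambda>\<beta>. \<Prod>i\<in>UNIV. of_nat (\<alpha> i choose \<beta> i) * (- (b $ i)) ^ (\<alpha> i - \<beta> i))"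

definition xi_at :: "nat \<Rightarrow> ('n::finite) coefs \<Rightarrow> 'n mi \<Rightarrow> real^'n \<Rightarrow> real" where
  "xi_at k \<xi> \<alpha> b = app k \<xi> (shiftmono b \<alpha>) / mfact \<alpha>"

definition delta :: "nat \<Rightarrow> real^('n::finite) \<Rightarrow> 'n coefs" where
  "delta k a = (\<lambda>\<beta>. if mdeg \<beta> \<le> k then (\<Prod>i\<in>UNIV. (a $ i) ^ (\<beta> i)) else 0)"

definition fibre :: "('a \<times> 'w) set \<Rightarrow> 'a \<Rightarrow> 'w set" where
  "fibre E a = {\<xi>. (a, \<xi>) \<in> E}"

definition fspan :: "('n::finite) coefs set \<Rightarrow> 'n coefs set" where
  "fspan S = {(\<lambda>\<beta>. \<Sum>j<(m::nat). c j * v j \<beta>) | m c v. \<forall>j<m. v j \<in> S}"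

definition DeltaE :: "nat \<Rightarrow> (real^('n::finite)) set \<Rightarrow> ((real^'n) \<times> 'n coefs) set
    \<Rightarrow> ((real^'n) \<times> (real^'n) \<times> 'n coefs) set" where
  "DeltaE k X E = {(a, b, (\<lambda>\<beta>. \<xi> \<beta> + \<eta> \<beta>)) | a b \<xi> \<eta>.
      a \<in> X \<and> b \<in> X \<and> \<xi> \<in> fibre E a \<and> \<eta> \<in> fibre E b \<and>
      (\<forall>\<alpha>\<in>mis k. dist a b ^ (k - mdeg \<alpha>) * \<bar>xi_at k \<eta> \<alpha> b\<bar> \<le> 1)}"

definition Eprime :: "nat \<Rightarrow> (real^('n::finite)) set \<Rightarrow> ((real^'n) \<times> 'n coefs) set
    \<Rightarrow> ((real^'n) \<times> 'n coefs) set" where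
  "Eprime k X E = {(a, \<xi>). (a, a, \<xi>) \<in> closure (DeltaE k X E) \<inter> (X \<times> X \<times> dualk k)}"

definition rho :: "nat \<Rightarrow> (real^('n::finite)) set \<Rightarrow> ((real^'n) \<times> 'n coefs) set
    \<Rightarrow> ((real^'n) \<times> 'n coefs) set" where
  "rho k X E = {(a, \<xi>). a \<in> X \<and> \<xi> \<in> fspan (fibre (Eprime k X E) a)}"

definition E0 :: "nat \<Rightarrow> (real^('n::finite)) set \<Rightarrow> ((real^'n) \<times> 'n coefs) set" where
  "E0 k X = {(a, (\<lambda>\<beta>. c * delta k a \<beta>)) | a (c::real). a \<in> X}"

definition tau :: "nat \<Rightarrow> (real^('n::finite)) set \<Rightarrow> ((real^'n) \<times> 'n coefs) set" where
  "tau k X = (rho k X ^^ (2 * rdim k TYPE('n))) (E0 k X)"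

text \<open>Taylor coefficient of P at a: coefficient of (x-a)^gamma, i.e. D^gamma P(a)/gamma!\<close>
definition taylor_coef :: "nat \<Rightarrow> real^('n::finite) \<Rightarrow> 'n coefs \<Rightarrow> 'n mi \<Rightarrow> real" where
  "taylor_coef q a P \<gamma> =
     (\<Sum>\<beta>\<in>mis q. P \<beta> * (\<Prod>i\<in>UNIV. of_nat (\<beta> i choose \<gamma> i) * (a $ i) ^ (\<beta> i - \<gamma> i)))"

definition proj :: "nat \<Rightarrow> nat \<Rightarrow> real^('n::finite) \<Rightarrow> 'n coefs \<Rightarrow> 'n coefs" where
  "proj q p a P = (\<lambda>\<beta>. \<Sum>\<gamma>\<in>mis p. taylor_coef q a P \<gamma> * shiftmono a \<gamma> \<beta>)"

definition iota :: "nat \<Rightarrow> nat \<Rightarrow> real^('n::finite) \<Rightarrow> 'n coefs \<Rightarrow> 'n coefs" where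
  "iota q p a \<xi> = (\<lambda>\<beta>. if mdeg \<beta> \<le> q then app p \<xi> (proj q p a (mono \<beta>)) else 0)"

definition tau_p :: "nat \<Rightarrow> nat \<Rightarrow> (real^('n::finite)) set \<Rightarrow> ((real^'n) \<times> 'n coefs) set" where
  "tau_p q p X = {(a, \<xi>). a \<in> X \<and> \<xi> \<in> dualk p \<and> (a, iota q p a \<xi>) \<in> tau q X}"

definition is_bundle :: "(real^('n::finite)) set \<Rightarrow> 'n coefs set \<Rightarrow> ((real^'n) \<times> 'n coefs) set \<Rightarrow> bool" where
  "is_bundle X W E \<longleftrightarrow> E \<subseteq> X \<times> W \<and>
     (\<forall>a\<in>X. (\<lambda>_. 0) \<in> fibre E a \<and>
        (\<forall>\<xi>\<in>fibre E a. \<forall>\<eta>\<in>fibre E a. (\<lambda>\<beta>. \<xi> \<beta> + \<eta> \<beta>) \<in> fibre E a) \<and>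
        (\<forall>\<xi>\<in>fibre E a. \<forall>c::real. (\<lambda>\<beta>. c * \<xi> \<beta>) \<in> fibre E a))"

end

theory Submission
  imports Defs "HOL-Library.Function_Algebras"
begin

text \<open>The bundle \<open>\<tau>\<^sup>q(X)\<^sub>p\<close> is the pullback of \<open>\<tau>\<^sup>q(X)\<close> along \<open>(a, \<xi>) \<mapsto> (a, \<iota>\<^sub>a \<xi>)\<close>, a continuous
  map that is linear in \<open>\<xi>\<close>, so it suffices that \<open>\<tau>\<^sup>q(X)\<close> is a closed bundle. Its fibres are spans,
  hence linear. For closedness, two properties of \<open>E \<mapsto> E'\<close> matter: it is local, and near \<open>a\<close> the
  fibres of \<open>E\<close> have dimension at most \<open>dim \<rho>(E)\<^sub>a\<close>. Consequently, if the iteration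
  \<open>E\<^sub>i = \<rho>\<^sup>i(E\<^sub>0)\<close> changes over \<open>a\<close> at step \<open>i + 2\<close>, it changes at step \<open>i\<close> over a nearby point \<open>c\<close>
  whose fibre of \<open>E\<^bsub>i+1\<^esub>\<close> has smaller dimension than the fibre of \<open>E\<^bsub>i+3\<^esub>\<close> over \<open>a\<close>; so a change at
  step \<open>i\<close> forces a fibre of dimension greater than \<open>i / 2\<close>. Fibres have dimension at most \<open>r\<^sub>q\<close>,
  hence \<open>\<rho>(\<tau>) = \<tau>\<close>, so \<open>\<tau> \<subseteq> \<tau>' \<subseteq> \<rho>(\<tau>) = \<tau>\<close>, and \<open>\<tau> = \<tau>'\<close> is closed.\<close>

instantiation "fun" :: (type, real_vector) real_vector
begin

definition scaleR_fun :: "real \<Rightarrow> ('a \<Rightarrow> 'b) \<Rightarrow> 'a \<Rightarrow> 'b" where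
  "scaleR_fun c f = (\<lambda>x. c *\<^sub>R f x)"

instance
  by standard (simp_all add: scaleR_fun_def fun_eq_iff scaleR_add_right scaleR_add_left)

end

lemma scaleR_fun_apply [simp]: "(c *\<^sub>R f) x = c *\<^sub>R f x"
  by (simp add: scaleR_fun_def)

lemma sum_fun_apply: "(\<Sum>a\<in>A. f a) x = (\<Sum>a\<in>A. f a x)"
  by (induct A rule: infinite_finite_induct) auto

section \<open>Finitely supported real functions\<close>

definition supported_on :: "'a set \<Rightarrow> ('a \<Rightarrow> real) set" where
  "supported_on S = {f. \<forall>x. x \<notin> S \<longrightarrow> f x = 0}"

definition determining :: "'a set \<Rightarrow> ('a \<Rightarrow> real) set \<Rightarrow> bool" where
  "determining T W \<longleftrightarrow> (\<forall>w\<in>W. (\<forall>t\<in>T. w t = 0) \<longrightarrow> w = 0)"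

lemma subspace_supported_on: "subspace (supported_on S)"
  by (auto simp: subspace_def supported_on_def)

lemma closed_supported_on: "closed (supported_on S)"
proof -
  have "supported_on S = (\<Inter>x\<in>-S. {f. f x = 0})"
    by (auto simp: supported_on_def)
  then show ?thesis
    by (simp add: closed_INT closed_Collect_eq continuous_on_product_coordinates)
qed

lemma supported_on_subset_span:
  assumes "finite S"
  shows "supported_on S \<subseteq> span ((\<lambda>x. indicator {x}) ` S)"
proof
  fix f :: "'a \<Rightarrow> real"
  assume f: "f \<in> supported_on S"
  have "f y = (\<Sum>x\<in>S. f x *\<^sub>R indicator {x}) y" for y
    using f assms by (cases "y \<in> S") (auto simp: sum_fun_apply supported_on_def indicator_def)
  then have "f = (\<Sum>x\<in>S. f x *\<^sub>R indicator {x})" ..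
  also have "\<dots> \<in> span ((\<lambda>x. indicator {x}) ` S)"
    by (intro span_sum span_scale span_base) auto
  finally show "f \<in> span ((\<lambda>x. indicator {x}) ` S)" .
qed

lemma dim_le_card_supported_on:
  assumes "finite S" "V \<subseteq> supported_on S"
  shows "dim V \<le> card S"
proof -
  have "dim V \<le> card ((\<lambda>x. indicator {x} :: 'a \<Rightarrow> real) ` S)"
    using assms supported_on_subset_span by (intro dim_le_card) auto
  also have "\<dots> \<le> card S"
    using assms(1) by (rule card_image_le)
  finally show ?thesis .
qed

lemma independent_card_le_dim_supported_on:
  assumes "finite S" "W \<subseteq> supported_on S" "independent B" "B \<subseteq> W"
  shows "finite B \<and> card B \<le> dim W"
proof -
  obtain B' where B': "B' \<subseteq> W" "independent B'" "W \<subseteq> span B'" "card B' = dim W"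
    by (rule basis_exists)
  have "finite B'"
    using independent_span_bound[OF _ B'(2)] B'(1) assms(1,2) supported_on_subset_span by blast
  moreover have "B \<subseteq> span B'"
    using assms(4) B'(3) by blast
  ultimately show ?thesis
    using independent_span_bound[OF _ assms(3), of B'] B'(4) by simp
qed

lemma dim_strict_mono_supported_on:
  assumes "finite S" "W \<subseteq> supported_on S" "subspace V" "V \<subset> W"
  shows "dim V < dim W"
proof -
  obtain B where B: "B \<subseteq> V" "independent B" "V \<subseteq> span B" "card B = dim V"
    by (rule basis_exists)
  obtain w where w: "w \<in> W" "w \<notin> V"
    using assms(4) by blast
  then have "w \<notin> span B"
    using span_minimal[OF B(1) assms(3)] by blast
  then have "independent (insert w B)"
    using B(2) by (rule independent_insertI)
  moreover have "insert w B \<subseteq> W"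
    using B(1) w(1) assms(4) by blast
  ultimately have "finite (insert w B) \<and> card (insert w B) \<le> dim W"
    using assms(1,2) by (intro independent_card_le_dim_supported_on)
  moreover have "w \<notin> B"
    using w(2) B(1) by blast
  ultimately show ?thesis
    using B(4) by auto
qed

lemma dim_le_card_if_determining:
  assumes "subspace V" "finite T" "determining T V"
  shows "dim V \<le> card T"
proof -
  obtain B where B: "B \<subseteq> V" "independent B" "V \<subseteq> span B" "card B = dim V"
    by (rule basis_exists)
  define R where "R f = (\<lambda>x. indicator T x * f x)" for f :: "'a \<Rightarrow> real"
  have "linear R"
    by (auto simp: R_def linear_iff fun_eq_iff algebra_simps)
  have "span B = V"
    using B(1,3) span_minimal[OF B(1) assms(1)] span_superset[of B] by blast
  have "inj_on R V"
    using assms(1,3) \<open>linear R\<close>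
    by (simp add: linear_inj_on_iff_eq_0 determining_def R_def fun_eq_iff indicator_def)
  then have "independent (R ` B)"
    using \<open>linear R\<close> B(2) \<open>span B = V\<close> by (intro linear_independent_injective_image) auto
  moreover have "R ` B \<subseteq> supported_on T"
    by (auto simp: R_def supported_on_def)
  ultimately have "card (R ` B) \<le> dim (supported_on T)"
    using assms(2) by (blast dest: independent_card_le_dim_supported_on)
  also have "\<dots> \<le> card T"
    using assms(2) by (simp add: dim_le_card_supported_on)
  finally show ?thesis
    using B(1,4) card_image[OF inj_on_subset[OF \<open>inj_on R V\<close> B(1)]] by simp
qed

lemma exists_determining_subset:
  assumes "finite S" "subspace W" "W \<subseteq> supported_on S"
  shows "\<exists>T\<subseteq>S. card T \<le> dim W \<and> determining T W"
  using assms
proof (induction S arbitrary: W rule: finite_induct)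
  case empty
  then show ?case
    by (auto simp: determining_def supported_on_def fun_eq_iff)
next
  case (insert s S)
  define W' where "W' = {w\<in>W. w s = 0}"
  have "subspace W'"
    using insert.prems(1) by (auto simp: W'_def subspace_def)
  moreover have "W' \<subseteq> supported_on S"
    using insert.prems(2) by (auto simp: W'_def supported_on_def)
  ultimately obtain T where T: "T \<subseteq> S" "card T \<le> dim W'" "determining T W'"
    using insert.IH by blast
  show ?case
  proof (cases "W' = W")
    case True
    then show ?thesis
      using T by blast
  next
    case False
    then have "dim W' < dim W"
      using insert.hyps(1) insert.prems(2) \<open>subspace W'\<close>
      by (intro dim_strict_mono_supported_on[of "insert s S"]) (auto simp: W'_def)
    moreover have "card (insert s T) \<le> Suc (card T)"
      by (simp add: card_insert_le_m1)
    moreover have "determining (insert s T) W"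
      using T(3) by (auto simp: determining_def W'_def)
    ultimately show ?thesis
      using T(1,2) by (intro exI[of _ "insert s T"]) auto
  qed
qed

definition sup_sphere :: "'a set \<Rightarrow> ('a \<Rightarrow> real) set" where
  "sup_sphere S = {u\<in>supported_on S. (\<forall>x. \<bar>u x\<bar> \<le> 1) \<and> (\<exists>x\<in>S. \<bar>u x\<bar> = 1)}"

lemma compact_sup_sphere:
  assumes "finite S"
  shows "compact (sup_sphere S)"
proof -
  define I where "I x = (if x \<in> S then {-1..1} else {0 :: real})" for x
  have "u x \<in> I x \<longleftrightarrow> (x \<notin> S \<longrightarrow> u x = 0) \<and> \<bar>u x\<bar> \<le> 1" for u :: "'a \<Rightarrow> real" and x
    by (auto simp: I_def abs_le_iff)
  then have "sup_sphere S = Pi\<^sub>E UNIV I \<inter> (\<Union>x\<in>S. {u. \<bar>u x\<bar> = 1})"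
    by (auto simp: sup_sphere_def supported_on_def PiE_UNIV_domain Pi_iff all_conj_distrib)
  moreover have "compact (Pi\<^sub>E UNIV I)"
  proof -
    have "compactin (product_topology (\<lambda>_. euclidean) UNIV) (Pi\<^sub>E UNIV I)"
      by (subst compactin_PiE) (auto simp: I_def)
    then show ?thesis
      by (simp add: euclidean_product_topology)
  qed
  moreover have "closed (\<Union>x\<in>S. {u :: 'a \<Rightarrow> real. \<bar>u x\<bar> = 1})"
    using assms
    by (intro closed_UN ballI closed_Collect_eq continuous_intros continuous_on_product_coordinates)
  ultimately show ?thesis
    by (simp add: compact_Int_closed)
qed

lemma scaleR_in_sup_sphere:
  assumes "finite S" "v \<in> supported_on S" "v \<noteq> 0"
  obtains c where "c *\<^sub>R v \<in> sup_sphere S"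
proof -
  obtain x0 where "v x0 \<noteq> 0"
    using assms(3) by (auto simp: fun_eq_iff)
  then have "x0 \<in> S"
    using assms(2) by (auto simp: supported_on_def)
  define M where "M = Max ((\<lambda>x. \<bar>v x\<bar>) ` S)"
  have le_M: "\<bar>v x\<bar> \<le> M" if "x \<in> S" for x
    using assms(1) that by (auto simp: M_def)
  have "M \<in> (\<lambda>x. \<bar>v x\<bar>) ` S"
    unfolding M_def using assms(1) \<open>x0 \<in> S\<close> by (intro Max_in) auto
  then obtain x1 where x1: "x1 \<in> S" "\<bar>v x1\<bar> = M"
    by blast
  have "M > 0"
    using le_M[OF \<open>x0 \<in> S\<close>] \<open>v x0 \<noteq> 0\<close> by linarith
  have "\<bar>v x\<bar> \<le> M" for x
    using le_M assms(2) \<open>M > 0\<close> by (cases "x \<in> S") (auto simp: supported_on_def)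
  then have "(1 / M) *\<^sub>R v \<in> sup_sphere S"
    using assms(2) x1 \<open>M > 0\<close>
    by (auto simp: sup_sphere_def supported_on_def abs_mult intro!: bexI[of _ x1])
  then show ?thesis
    by (rule that)
qed

section \<open>The operator \<open>\<rho>\<close>\<close>

lemma exists_in_sup_sphere_vanishing_on:
  assumes "finite S" "subspace V" "V \<subseteq> supported_on S" "finite T" "card T < dim V"
  obtains u where "u \<in> V" "u \<in> sup_sphere S" "u \<in> supported_on (- T)"
proof -
  have "\<not> determining T V"
    using dim_le_card_if_determining[OF assms(2,4)] assms(5) by fastforce
  then obtain v where v: "v \<in> V" "v \<in> supported_on (- T)" "v \<noteq> 0"
    by (auto simp: determining_def supported_on_def)
  then obtain c where "c *\<^sub>R v \<in> sup_sphere S"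
    using scaleR_in_sup_sphere[OF assms(1)] assms(3) by blast
  moreover have "c *\<^sub>R v \<in> V" "c *\<^sub>R v \<in> supported_on (- T)"
    using v(1,2) assms(2) subspace_supported_on[of "- T"] by (simp_all add: subspace_scale)
  ultimately show ?thesis
    using that by blast
qed

lemma finite_mis: "finite (mis k :: ('n::finite) mi set)"
proof -
  have "mis k \<subseteq> (Pi\<^sub>E UNIV (\<lambda>_. {..k}) :: 'n mi set)"
  proof
    fix \<alpha> :: "'n mi"
    assume "\<alpha> \<in> mis k"
    moreover have "\<alpha> i \<le> mdeg \<alpha>" for i
      unfolding mdeg_def by (rule member_le_sum) auto
    ultimately show "\<alpha> \<in> Pi\<^sub>E UNIV (\<lambda>_. {..k})"
      by (auto simp: mis_def PiE_UNIV_domain intro: le_trans)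
  qed
  then show ?thesis
    by (rule finite_subset) (simp add: finite_PiE)
qed

lemma dualk_eq_supported_on: "dualk k = supported_on (mis k)"
  by (auto simp: dualk_def supported_on_def mis_def)

lemma is_bundle_iff_subspace:
  "is_bundle X W E \<longleftrightarrow> E \<subseteq> X \<times> W \<and> (\<forall>a\<in>X. subspace (fibre E a))"
  by (simp add: is_bundle_def subspace_def zero_fun_def plus_fun_def scaleR_fun_def) blast

lemma fspan_eq_span: "fspan S = span S"
proof
  show "fspan S \<subseteq> span S"
  proof
    fix x
    assume "x \<in> fspan S"
    then obtain m c v where x: "x = (\<lambda>\<beta>. \<Sum>j<(m::nat). c j * v j \<beta>)" and v: "\<forall>j<m. v j \<in> S"
      unfolding fspan_def by blast
    have "x = (\<Sum>j<m. c j *\<^sub>R v j)"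
      unfolding x by (simp add: fun_eq_iff sum_fun_apply)
    also have "\<dots> \<in> span S"
      using v by (intro span_sum span_scale span_base) auto
    finally show "x \<in> span S" .
  qed
next
  show "span S \<subseteq> fspan S"
  proof
    fix x
    assume "x \<in> span S"
    then obtain t r where x: "x = (\<Sum>a\<in>t. r a *\<^sub>R a)" and t: "finite t" "t \<subseteq> S"
      unfolding span_explicit by blast
    obtain h where h: "bij_betw h {..<card t} t"
      using t(1) by (metis atLeast0LessThan ex_bij_betw_nat_finite)
    have "x = (\<Sum>j<card t. r (h j) *\<^sub>R h j)"
      unfolding x by (rule sum.reindex_bij_betw[symmetric, OF h])
    then have "x = (\<lambda>\<beta>. \<Sum>j<card t. r (h j) * h j \<beta>)"
      by (simp add: fun_eq_iff sum_fun_apply)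
    moreover have "\<forall>j<card t. h j \<in> S"
      using h t(2) by (auto simp: bij_betw_def)
    ultimately show "x \<in> fspan S"
      unfolding fspan_def by (intro CollectI exI[of _ "card t"] exI[of _ "r \<circ> h"] exI[of _ h]) simp
  qed
qed

lemma fibre_rho: "fibre (rho k X E) a = (if a \<in> X then span (fibre (Eprime k X E) a) else {})"
  by (auto simp: fibre_def rho_def fspan_eq_span)

lemma fibre_Eprime_subset_dualk: "fibre (Eprime k X E) a \<subseteq> dualk k"
  by (auto simp: fibre_def Eprime_def)

lemma is_bundle_rho: "is_bundle X (dualk k) (rho k X E)"
proof -
  have "span (fibre (Eprime k X E) a) \<subseteq> dualk k" for a
    using fibre_Eprime_subset_dualk subspace_supported_on
    unfolding dualk_eq_supported_on by (rule span_minimal)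
  then have "rho k X E \<subseteq> X \<times> dualk k"
    by (force simp: rho_def fspan_eq_span fibre_def)
  then show ?thesis
    by (simp add: is_bundle_iff_subspace fibre_rho)
qed

lemma is_bundle_E0: "is_bundle X (dualk k) (E0 k X)"
proof -
  have "fibre (E0 k X) a = span {delta k a}" if "a \<in> X" for a
    using that by (auto simp: fibre_def E0_def span_singleton fun_eq_iff)
  moreover have "E0 k X \<subseteq> X \<times> dualk k"
    by (auto simp: E0_def dualk_def delta_def)
  ultimately show ?thesis
    by (simp add: is_bundle_iff_subspace)
qed

lemma diag_in_DeltaE:
  assumes "is_bundle X W E" "c \<in> X" "\<xi> \<in> fibre E c"
  shows "(c, c, \<xi>) \<in> DeltaE k X E"
proof -
  have "0 \<in> fibre E c"
    using assms(1,2) by (simp add: is_bundle_iff_subspace subspace_0)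
  then have "(c, c, (\<lambda>\<beta>. \<xi> \<beta> + 0 \<beta>)) \<in> DeltaE k X E"
    unfolding DeltaE_def using assms(2,3) by (fastforce simp: xi_at_def app_def)
  then show ?thesis
    by simp
qed

lemma subset_Eprime:
  assumes "is_bundle X (dualk k) E"
  shows "E \<subseteq> Eprime k X E"
proof
  fix p
  assume "p \<in> E"
  moreover obtain a \<xi> where p: "p = (a, \<xi>)"
    by fastforce
  ultimately have "a \<in> X" "\<xi> \<in> dualk k" "\<xi> \<in> fibre E a"
    using assms by (auto simp: is_bundle_def fibre_def)
  then show "p \<in> Eprime k X E"
    using diag_in_DeltaE[OF assms] closure_subset by (fastforce simp: Eprime_def p)
qed

lemma subset_rho:
  assumes "is_bundle X (dualk k) E"
  shows "E \<subseteq> rho k X E"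
  using subset_Eprime[OF assms] assms span_superset
  by (fastforce simp: rho_def fspan_eq_span fibre_def is_bundle_def)

lemma fibre_subset_dualk: "is_bundle X (dualk k) E \<Longrightarrow> fibre E a \<subseteq> dualk k"
  by (auto simp: is_bundle_def fibre_def)

lemma DeltaE_local:
  fixes X :: "(real^'n::finite) set"
  assumes "\<forall>c\<in>X \<inter> U. fibre F c = fibre E c"
  shows "(U \<times> U \<times> UNIV) \<inter> DeltaE k X F = (U \<times> U \<times> UNIV) \<inter> DeltaE k X E"
proof -
  have "(U \<times> U \<times> UNIV) \<inter> DeltaE k X F \<subseteq> DeltaE k X E"
    if same: "\<forall>c\<in>X \<inter> U. fibre F c = fibre E c" for E F :: "((real^'n) \<times> 'n coefs) set"
  proof
    fix p
    assume "p \<in> (U \<times> U \<times> UNIV) \<inter> DeltaE k X F"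
    then obtain a b \<xi> \<eta> where p: "p = (a, b, (\<lambda>\<beta>. \<xi> \<beta> + \<eta> \<beta>))" "a \<in> X \<inter> U" "b \<in> X \<inter> U"
      "\<xi> \<in> fibre F a" "\<eta> \<in> fibre F b" "\<forall>\<alpha>\<in>mis k. dist a b ^ (k - mdeg \<alpha>) * \<bar>xi_at k \<eta> \<alpha> b\<bar> \<le> 1"
      unfolding DeltaE_def by blast
    then show "p \<in> DeltaE k X E"
      using same unfolding DeltaE_def by blast
  qed
  then show ?thesis
    using assms by blast
qed

lemma fibre_Eprime_local:
  fixes X :: "(real^'n::finite) set"
  assumes "\<epsilon> > 0" "\<forall>c\<in>X. dist c a < \<epsilon> \<longrightarrow> fibre F c = fibre E c"
  shows "fibre (Eprime k X F) a = fibre (Eprime k X E) a"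
proof -
  define N where "N = ball a \<epsilon> \<times> ball a \<epsilon> \<times> (UNIV :: 'n coefs set)"
  have "open N"
    by (simp add: N_def open_Times)
  have closure_local: "x \<in> closure D \<longleftrightarrow> x \<in> closure (N \<inter> D)" if "x \<in> N" for x D
    using open_Int_closure_subset[OF \<open>open N\<close>, of D] closure_mono[of "N \<inter> D" D] that by blast
  have same_near: "N \<inter> DeltaE k X F = N \<inter> DeltaE k X E"
    unfolding N_def using assms(2) by (intro DeltaE_local) (auto simp: dist_commute)
  have "(a, a, \<xi>) \<in> closure (DeltaE k X F) \<longleftrightarrow> (a, a, \<xi>) \<in> closure (DeltaE k X E)" for \<xi>
  proof -
    have "(a, a, \<xi>) \<in> N"
      using assms(1) by (simp add: N_def)
    then show ?thesis
      using closure_local same_near by metis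
  qed
  then show ?thesis
    by (auto simp: fibre_def Eprime_def)
qed

lemma fibre_rho_local:
  assumes "\<epsilon> > 0" "\<forall>c\<in>X. dist c a < \<epsilon> \<longrightarrow> fibre F c = fibre E c"
  shows "fibre (rho k X F) a = fibre (rho k X E) a"
  by (simp add: fibre_rho fibre_Eprime_local[OF assms])

lemma diag_limit_in_fibre_Eprime:
  assumes "is_bundle X W E" "a \<in> X" "l \<in> dualk k"
    and "\<And>n. c n \<in> X" "\<And>n. u n \<in> fibre E (c n)" "c \<longlonglongrightarrow> a" "u \<longlonglongrightarrow> l"
  shows "l \<in> fibre (Eprime k X E) a"
proof -
  have "(\<lambda>n. (c n, c n, u n)) \<longlonglongrightarrow> (a, a, l)"
    by (intro tendsto_Pair assms(6,7))
  moreover have "(c n, c n, u n) \<in> DeltaE k X E" for n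
    using assms(1,4,5) by (rule diag_in_DeltaE)
  ultimately have "(a, a, l) \<in> closure (DeltaE k X E)"
    unfolding closure_sequential by (intro exI[of _ "\<lambda>n. (c n, c n, u n)"]) simp
  then show ?thesis
    using assms(2,3) by (simp add: fibre_def Eprime_def)
qed

lemma fibre_Eprime_meets_compact:
  assumes "is_bundle X W E" "a \<in> X" "compact K" "K \<subseteq> dualk k"
    and "\<And>n. c n \<in> X" "\<And>n. u n \<in> fibre E (c n)" "\<And>n. u n \<in> K" "c \<longlonglongrightarrow> a"
  obtains l where "l \<in> K" "l \<in> fibre (Eprime k X E) a"
proof -
  obtain l r where l: "l \<in> K" "strict_mono r" "(u \<circ> r) \<longlonglongrightarrow> l"
    using compact_imp_seq_compact[OF assms(3)] assms(7) unfolding seq_compact_def by blast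
  have "(c \<circ> r) \<longlonglongrightarrow> a"
    using assms(8) l(2) by (rule LIMSEQ_subseq_LIMSEQ)
  then have "l \<in> fibre (Eprime k X E) a"
    using assms(1,2,4,5,6) l
    by (intro diag_limit_in_fibre_Eprime[where c = "c \<circ> r" and u = "u \<circ> r"]) auto
  then show ?thesis
    using l(1) that by blast
qed

text \<open>Choose coordinates \<open>T\<close> determining \<open>W = \<rho>(E)\<^sub>a\<close> with \<open>|T| \<le> dim W\<close>. Fibres of larger dimension
  contain sup-norm unit vectors vanishing on \<open>T\<close>; if such fibres occurred arbitrarily close to \<open>a\<close>,
  a limit of these vectors would be a nonzero element of \<open>E'\<^sub>a \<subseteq> W\<close> vanishing on \<open>T\<close>.\<close>

lemma dim_fibre_le_dim_fibre_rho_near: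
  fixes X :: "(real^'n::finite) set"
  assumes E: "is_bundle X (dualk k) E" and "a \<in> X"
  shows "\<exists>\<epsilon>>0. \<forall>c\<in>X. dist c a < \<epsilon> \<longrightarrow> dim (fibre E c) \<le> dim (fibre (rho k X E) a)"
proof (rule ccontr)
  define W where "W = fibre (rho k X E) a"
  have "subspace W"
    using is_bundle_rho[of X k E] \<open>a \<in> X\<close> by (simp add: W_def is_bundle_iff_subspace)
  moreover have "W \<subseteq> supported_on (mis k)"
    unfolding W_def dualk_eq_supported_on[symmetric] by (rule fibre_subset_dualk[OF is_bundle_rho])
  ultimately obtain T where T: "T \<subseteq> mis k" "card T \<le> dim W" "determining T W"
    using exists_determining_subset[OF finite_mis] by blast
  have "finite T"
    using T(1) finite_mis by (rule finite_subset)
  define K where "K = sup_sphere (mis k) \<inter> supported_on (- T)"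
  assume no_bound: "\<not> ?thesis"
  have "\<exists>c u. c \<in> X \<and> dist c a < 1 / Suc n \<and> u \<in> fibre E c \<and> u \<in> K" for n
  proof -
    have "\<forall>\<epsilon>>0. \<exists>c\<in>X. dist c a < \<epsilon> \<and> dim W < dim (fibre E c)"
      using no_bound by (auto simp: W_def not_le)
    moreover have "1 / Suc n > (0 :: real)"
      by simp
    ultimately obtain c where c: "c \<in> X" "dist c a < 1 / Suc n" "dim W < dim (fibre E c)"
      by blast
    have "subspace (fibre E c)" "fibre E c \<subseteq> supported_on (mis k)"
      using E c(1) fibre_subset_dualk[OF E] by (simp_all add: is_bundle_iff_subspace dualk_eq_supported_on)
    moreover have "card T < dim (fibre E c)"
      using T(2) c(3) by linarith
    ultimately obtain u where "u \<in> fibre E c" "u \<in> sup_sphere (mis k)" "u \<in> supported_on (- T)"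
      using exists_in_sup_sphere_vanishing_on[OF finite_mis _ _ \<open>finite T\<close>] by metis
    then show ?thesis
      using c(1,2) by (auto simp: K_def)
  qed
  then obtain c u where cu: "\<And>n. c n \<in> X" "\<And>n. dist (c n) a < 1 / Suc n"
    "\<And>n. u n \<in> fibre E (c n)" "\<And>n. u n \<in> K"
    by metis
  have "(\<lambda>n. c n - a) \<longlonglongrightarrow> 0"
    using cu(2) by (intro LIMSEQ_norm_0) (simp add: dist_norm)
  then have "c \<longlonglongrightarrow> a"
    by (simp add: LIM_zero_iff)
  have "compact K"
    unfolding K_def by (intro compact_Int_closed compact_sup_sphere finite_mis closed_supported_on)
  have "K \<subseteq> dualk k"
    by (auto simp: K_def sup_sphere_def dualk_eq_supported_on)
  obtain l where l: "l \<in> K" "l \<in> fibre (Eprime k X E) a"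
    by (rule fibre_Eprime_meets_compact[OF E \<open>a \<in> X\<close> \<open>compact K\<close> \<open>K \<subseteq> dualk k\<close> cu(1,3,4) \<open>c \<longlonglongrightarrow> a\<close>])
  from l(2) have "l \<in> W"
    using \<open>a \<in> X\<close> span_superset by (auto simp: W_def fibre_rho)
  then have "l = 0"
    using T(3) l(1) by (auto simp: determining_def K_def supported_on_def)
  then show False
    using l(1) by (simp add: K_def sup_sphere_def)
qed

section \<open>Stabilisation of the iterates of \<open>\<rho>\<close>\<close>

definition rho_pow :: "nat \<Rightarrow> (real^('n::finite)) set \<Rightarrow> nat \<Rightarrow> ((real^'n) \<times> 'n coefs) set" where
  "rho_pow k X i = (rho k X ^^ i) (E0 k X)"

definition grows_at :: "nat \<Rightarrow> (real^('n::finite)) set \<Rightarrow> nat \<Rightarrow> real^'n \<Rightarrow> bool" where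
  "grows_at k X i a \<longleftrightarrow> a \<in> X \<and> fibre (rho_pow k X (Suc i)) a \<noteq> fibre (rho_pow k X i) a"

lemma rho_pow_Suc: "rho_pow k X (Suc i) = rho k X (rho_pow k X i)"
  by (simp add: rho_pow_def)

lemma is_bundle_rho_pow: "is_bundle X (dualk k) (rho_pow k X i)"
  by (cases i) (simp_all add: rho_pow_def is_bundle_E0 is_bundle_rho)

lemma dim_fibre_rho_pow_le:
  fixes X :: "(real^'n::finite) set"
  shows "dim (fibre (rho_pow k X i) a) \<le> card (mis k :: 'n mi set)"
  using fibre_subset_dualk[OF is_bundle_rho_pow]
  by (intro dim_le_card_supported_on finite_mis) (simp add: dualk_eq_supported_on)

lemma dim_fibre_rho_pow_less_if_grows:
  assumes "grows_at k X i a"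
  shows "dim (fibre (rho_pow k X i) a) < dim (fibre (rho_pow k X (Suc i)) a)"
proof (rule dim_strict_mono_supported_on[OF finite_mis])
  show "fibre (rho_pow k X (Suc i)) a \<subseteq> supported_on (mis k)"
    using fibre_subset_dualk[OF is_bundle_rho_pow] by (simp add: dualk_eq_supported_on)
  show "subspace (fibre (rho_pow k X i) a)"
    using assms is_bundle_rho_pow[of X k i] by (simp add: grows_at_def is_bundle_iff_subspace)
  show "fibre (rho_pow k X i) a \<subset> fibre (rho_pow k X (Suc i)) a"
    using assms subset_rho[OF is_bundle_rho_pow]
    by (auto simp: grows_at_def fibre_def rho_pow_Suc)
qed

lemma grows_at_near:
  assumes "grows_at k X (Suc i) a" "\<epsilon> > 0"
  shows "\<exists>c\<in>X. dist c a < \<epsilon> \<and> grows_at k X i c"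
proof (rule ccontr)
  assume "\<not> ?thesis"
  then have "\<forall>c\<in>X. dist c a < \<epsilon> \<longrightarrow> fibre (rho_pow k X (Suc i)) c = fibre (rho_pow k X i) c"
    by (auto simp: grows_at_def)
  then have "fibre (rho k X (rho_pow k X (Suc i))) a = fibre (rho k X (rho_pow k X i)) a"
    by (rule fibre_rho_local[OF assms(2)])
  then show False
    using assms(1) by (simp add: grows_at_def rho_pow_Suc)
qed

lemma grows_at_earlier_with_smaller_dim:
  assumes "grows_at k X (Suc (Suc i)) a"
  shows "\<exists>c. grows_at k X i c \<and>
    dim (fibre (rho_pow k X (Suc i)) c) < dim (fibre (rho_pow k X (Suc (Suc (Suc i)))) a)"
proof -
  have "a \<in> X"
    using assms by (simp add: grows_at_def)
  obtain \<epsilon> where "\<epsilon> > 0" and near: "\<And>c. c \<in> X \<Longrightarrow> dist c a < \<epsilon> \<Longrightarrow>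
      dim (fibre (rho_pow k X (Suc i)) c) \<le> dim (fibre (rho_pow k X (Suc (Suc i))) a)"
    using dim_fibre_le_dim_fibre_rho_near[OF is_bundle_rho_pow[of X k "Suc i"] \<open>a \<in> X\<close>]
    unfolding rho_pow_Suc[symmetric] by blast
  have "\<epsilon> / 2 > 0"
    using \<open>\<epsilon> > 0\<close> by simp
  obtain c1 where c1: "c1 \<in> X" "dist c1 a < \<epsilon> / 2" "grows_at k X (Suc i) c1"
    using grows_at_near[OF assms \<open>\<epsilon> / 2 > 0\<close>] by blast
  obtain c2 where c2: "c2 \<in> X" "dist c2 c1 < \<epsilon> / 2" "grows_at k X i c2"
    using grows_at_near[OF c1(3) \<open>\<epsilon> / 2 > 0\<close>] by blast
  have "dist c2 a < \<epsilon>"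
    using dist_triangle[of c2 a c1] c1(2) c2(2) by linarith
  then have "dim (fibre (rho_pow k X (Suc i)) c2) \<le> dim (fibre (rho_pow k X (Suc (Suc i))) a)"
    using near c2(1) by blast
  also have "\<dots> < dim (fibre (rho_pow k X (Suc (Suc (Suc i)))) a)"
    using assms by (rule dim_fibre_rho_pow_less_if_grows)
  finally show ?thesis
    using c2(3) by blast
qed

lemma dim_fibre_rho_pow_ge_if_grows:
  "grows_at k X i a \<Longrightarrow> i div 2 + 1 \<le> dim (fibre (rho_pow k X (Suc i)) a)"
proof (induction i arbitrary: a rule: nat_induct2)
  case 0
  then show ?case
    using dim_fibre_rho_pow_less_if_grows by fastforce
next
  case 1
  then show ?case
    using dim_fibre_rho_pow_less_if_grows by fastforce
next
  case (step i)
  then have "grows_at k X (Suc (Suc i)) a"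
    by (simp add: numeral_2_eq_2)
  then obtain c where "grows_at k X i c"
    and "dim (fibre (rho_pow k X (Suc i)) c) < dim (fibre (rho_pow k X (Suc (Suc (Suc i)))) a)"
    using grows_at_earlier_with_smaller_dim by blast
  moreover from \<open>grows_at k X i c\<close> have "i div 2 + 1 \<le> dim (fibre (rho_pow k X (Suc i)) c)"
    by (rule step.IH)
  moreover have "Suc (i + 2) = Suc (Suc (Suc i))" "(i + 2) div 2 = i div 2 + 1"
    by simp_all
  ultimately show ?case
    by simp
qed

lemma bundle_eq_iff_fibres_eq: "E = F \<longleftrightarrow> (\<forall>a. fibre E a = fibre F a)"
  by (auto simp: fibre_def)

lemma rho_tau:
  fixes X :: "(real^'n::finite) set"
  shows "rho k X (tau k X) = tau k X"
proof -
  define m where "m = 2 * card (mis k :: 'n mi set)"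
  have "\<not> grows_at k X m a" for a
  proof
    assume "grows_at k X m a"
    then have "m div 2 + 1 \<le> dim (fibre (rho_pow k X (Suc m)) a)"
      by (rule dim_fibre_rho_pow_ge_if_grows)
    with dim_fibre_rho_pow_le[of k X "Suc m" a] show False
      by (simp add: m_def)
  qed
  moreover have "fibre (rho_pow k X i) a = {}" if "a \<notin> X" for i a
    using is_bundle_rho_pow[of X k i] that by (auto simp: is_bundle_def fibre_def)
  ultimately have "rho_pow k X (Suc m) = rho_pow k X m"
    unfolding bundle_eq_iff_fibres_eq grows_at_def by metis
  moreover have "tau k X = rho_pow k X m"
    by (simp add: tau_def rho_pow_def rdim_def m_def)
  ultimately show ?thesis
    by (simp add: rho_pow_Suc)
qed

lemma is_bundle_tau: "is_bundle X (dualk k) (tau k X)"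
  by (metis rho_tau is_bundle_rho)

lemma Eprime_subset_rho: "Eprime k X E \<subseteq> rho k X E"
  using span_superset by (fastforce simp: rho_def Eprime_def fspan_eq_span fibre_def)

lemma Eprime_tau: "Eprime k X (tau k X) = tau k X"
  using subset_Eprime[OF is_bundle_tau] Eprime_subset_rho[of k X "tau k X"] rho_tau[of k X]
  by blast

lemma closed_Eprime:
  assumes "closed X"
  shows "closed (Eprime k X E)"
proof -
  have "Eprime k X E = (\<lambda>p. (fst p, fst p, snd p)) -` (closure (DeltaE k X E) \<inter> (X \<times> X \<times> dualk k))"
    by (auto simp: Eprime_def)
  also have "closed \<dots>"
    unfolding dualk_eq_supported_on
    by (intro closed_vimage closed_Int closed_closure closed_Times assms closed_supported_on continuous_intros)
  finally show ?thesis .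
qed

lemma closed_tau: "closed X \<Longrightarrow> closed (tau k X)"
  by (metis Eprime_tau closed_Eprime)

section \<open>Pulling back along \<open>\<iota>\<close>\<close>

lemma is_bundle_pullback:
  assumes "is_bundle X W E" "subspace V" "\<And>a. linear (f a)"
  shows "is_bundle X V {(a, \<xi>). a \<in> X \<and> \<xi> \<in> V \<and> (a, f a \<xi>) \<in> E}"
proof -
  have "fibre {(a, \<xi>). a \<in> X \<and> \<xi> \<in> V \<and> (a, f a \<xi>) \<in> E} a = V \<inter> f a -` fibre E a" if "a \<in> X" for a
    using that by (auto simp: fibre_def)
  then show ?thesis
    using assms by (auto simp: is_bundle_iff_subspace intro!: subspace_inter linear_subspace_vimage)
qed

lemma closedin_pullback:
  assumes "closed E" "continuous_on UNIV (\<lambda>x. f (fst x) (snd x))"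
  shows "closedin (top_of_set (X \<times> V)) {(a, \<xi>). a \<in> X \<and> \<xi> \<in> V \<and> (a, f a \<xi>) \<in> E}"
proof -
  have "{(a, \<xi>). a \<in> X \<and> \<xi> \<in> V \<and> (a, f a \<xi>) \<in> E} = (X \<times> V) \<inter> (\<lambda>x. (fst x, f (fst x) (snd x))) -` E"
    by auto
  moreover have "closed ((\<lambda>x. (fst x, f (fst x) (snd x))) -` E)"
    by (intro closed_vimage assms continuous_on_Pair continuous_on_fst continuous_on_id)
  ultimately show ?thesis
    by (simp add: closedin_closed_Int)
qed

lemma linear_iota: "linear (iota q p a)"
  by (auto simp: linear_iff iota_def app_def fun_eq_iff sum.distrib distrib_right sum_distrib_left mult.assoc)

lemma continuous_on_snd_apply: "continuous_on S (\<lambda>x. snd x \<gamma>)"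
  by (rule continuous_on_product_then_coordinatewise) (intro continuous_on_snd continuous_on_id)

lemma continuous_on_iota: "continuous_on UNIV (\<lambda>x. iota q p (fst x) (snd x))"
proof (rule continuous_on_coordinatewise_then_product)
  fix \<beta>
  show "continuous_on UNIV (\<lambda>x. iota q p (fst x) (snd x) \<beta>)"
  proof (cases "mdeg \<beta> \<le> q")
    case True
    then show ?thesis
      unfolding iota_def app_def proj_def taylor_coef_def shiftmono_def
      by (simp only: if_True) (intro continuous_intros continuous_on_snd_apply)
  next
    case False
    then show ?thesis
      by (simp add: iota_def)
  qed
qed

theorem lemma2p2:
  fixes X :: "(real^'n::finite) set" and p q :: nat
  assumes "closed X" and "p \<le> q"
  shows "is_bundle X (dualk p) (tau_p q p X) \<and>
         closedin (top_of_set (X \<times> dualk p)) (tau_p q p X)"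
proof -
  have "tau_p q p X = {(a, \<xi>). a \<in> X \<and> \<xi> \<in> dualk p \<and> (a, iota q p a \<xi>) \<in> tau q X}"
    by (simp add: tau_p_def)
  moreover have "subspace (dualk p)"
    by (simp add: dualk_eq_supported_on subspace_supported_on)
  ultimately show ?thesis
    using is_bundle_pullback[OF is_bundle_tau _ linear_iota]
      closedin_pullback[OF closed_tau[OF assms(1)] continuous_on_iota]
    by simp
qed

end
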